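(* Let $\Gamma$ be a finite set of models, $p(\bm{y}\mid\bm{\gamma})\ge0$ a marginal likelihood for each $\bm{\gamma}\in\Gamma$, and $\pi(\bm{\gamma}\mid\bm{\omega})$, $\bm{\omega}\in\mathbb{R}^q$, an arbitrary model prior (positive and differentiable in $\bm{\omega}$). Let $p(\bm{y}\mid\bm{\omega})=\sum_{\bm{\gamma}}p(\bm{y}\mid\bm{\gamma})\pi(\bm{\gamma}\mid\bm{\omega})>0$ and $\pi(\bm{\gamma}\mid\bm{y},\bm{\omega})\propto p(\bm{y}\mid\bm{\gamma})\pi(\bm{\gamma}\mid\bm{\omega})$. Then $$\nabla_{\bm{\omega}}\log p(\bm{y}\mid\bm{\omega})=E_{\bm{\gamma}}\big[\nabla_{\bm{\omega}}\log\pi(\bm{\gamma}\mid\bm{\omega})\mid\bm{y},\bm{\omega}\big]=\sum_{\bm{\gamma}}\pi(\bm{\gamma}\mid\bm{y},\bm{\omega})\nabla_{\bm{\omega}}\log\pi(\bm{\gamma}\mid\bm{\omega}).$$ If $\Gamma=\{0,1\}^p$ and $\pi(\bm{\gamma}\mid\bm{\omega})=\prod_{j=1}^p\mathrm{Bern}(\gamma_j;m_j(\bm{\omega}))$ for given differentiable $m_j:\mathbb{R}^q\to(0,1)$, then $$\nabla_{\bm{\omega}}\log p(\bm{y}\mid\bm{\omega})=\sum_{j=1}^p\frac{\nabla_{\bm{\omega}}m_j(\bm{\omega})}{m_j(\bm{\omega})[1-m_j(\bm{\omega})]}\big[\pi(\gamma_j=1\mid\bm{y},\bm{\omega})-\pi(\gamma_j=1\mid\bm{\omega})\big].$$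 Further, for the inverse logit $m_j(\bm{\omega})=(1+e^{-\bm{z}_j^T\bm{\omega}})^{-1}$ with given $\bm{z}_j\in\mathbb{R}^q$, $\nabla_{\bm{\omega}}\log p(\bm{y}\mid\bm{\omega})=\sum_{j=1}^p\bm{z}_j\big[\pi(\gamma_j=1\mid\bm{y},\bm{\omega})-\pi(\gamma_j=1\mid\bm{\omega})\big]$.
   Context: $\pi(\gamma_j=1\mid\bm{y},\bm{\omega})=\sum_{\bm{\gamma}:\gamma_j=1}\pi(\bm{\gamma}\mid\bm{y},\bm{\omega})$ is the posterior inclusion probability and $\pi(\gamma_j=1\mid\bm{\omega})=m_j(\bm{\omega})$ the prior inclusion probability. *)

theory Defs
  imports "HOL-Analysis.Analysis"
begin

definition marg :: "'g set \<Rightarrow> ('g \<Rightarrow> real) \<Rightarrow> ('g \<Rightarrow> 'w \<Rightarrow> real) \<Rightarrow> 'w \<Rightarrow> real" where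
  "marg \<Gamma> lik prior \<omega> = (\<Sum>\<gamma>\<in>\<Gamma>. lik \<gamma> * prior \<gamma> \<omega>)"

definition post :: "'g set \<Rightarrow> ('g \<Rightarrow> real) \<Rightarrow> ('g \<Rightarrow> 'w \<Rightarrow> real) \<Rightarrow> 'g \<Rightarrow> 'w \<Rightarrow> real" where
  "post \<Gamma> lik prior \<gamma> \<omega> = lik \<gamma> * prior \<gamma> \<omega> / marg \<Gamma> lik prior \<omega>"

definition grad :: "('a::real_inner \<Rightarrow> real) \<Rightarrow> 'a \<Rightarrow> 'a" where
  "grad f x = (THE g. GDERIV f x :> g)"

definition binary_models :: "nat \<Rightarrow> (nat \<Rightarrow> nat) set" where
  "binary_models p = {\<gamma>. (\<forall>j\<in>{1..p}. \<gamma> j \<in> {0,1}) \<and> (\<forall>j. j \<notin> {1..p} \<longrightarrow> \<gamma> j = 0)}"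

definition bern :: "nat \<Rightarrow> real \<Rightarrow> real" where
  "bern g m = m ^ g * (1 - m) ^ (1 - g)"

definition bern_prior :: "nat \<Rightarrow> (nat \<Rightarrow> 'w \<Rightarrow> real) \<Rightarrow> (nat \<Rightarrow> nat) \<Rightarrow> 'w \<Rightarrow> real" where
  "bern_prior p m \<gamma> \<omega> = (\<Prod>j=1..p. bern (\<gamma> j) (m j \<omega>))"

definition incl_post :: "'a set \<Rightarrow> ('a \<Rightarrow> real) \<Rightarrow> ('a \<Rightarrow> 'w \<Rightarrow> real) \<Rightarrow> ('a \<Rightarrow> nat \<Rightarrow> nat) \<Rightarrow> nat \<Rightarrow> 'w \<Rightarrow> real" where
  "incl_post \<Gamma> lik prior coord j \<omega> = (\<Sum>\<gamma>\<in>{\<gamma>\<in>\<Gamma>. coord \<gamma> j = 1}. post \<Gamma> lik prior \<gamma> \<omega>)"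

definition inv_logit :: "'a::real_inner \<Rightarrow> 'a \<Rightarrow> real" where
  "inv_logit z \<omega> = 1 / (1 + exp (- (z \<bullet> \<omega>)))"

end

theory Submission
  imports Defs
begin

text \<open>Since \<open>p(y|\<omega>)\<close> is a finite sum, its gradient is \<open>\<Sum>\<gamma> p(y|\<gamma>) \<nabla>\<pi>(\<gamma>|\<omega>)\<close>; writing
  \<open>\<nabla>\<pi> = \<pi> \<nabla>log \<pi>\<close> and dividing by \<open>p(y|\<omega>)\<close> turns this into the posterior mean of
  \<open>\<nabla>log \<pi>(\<gamma>|\<omega>)\<close>. For the product-Bernoulli prior, \<open>\<nabla>log \<pi>(\<gamma>|\<omega>)\<close> is the sum over \<open>j\<close>
  of \<open>(\<gamma>\<^sub>j - m\<^sub>j) \<nabla>m\<^sub>j / (m\<^sub>j (1 - m\<^sub>j))\<close>, which is affine in \<open>\<gamma>\<^sub>j\<close>; its posterior mean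
  therefore only involves the posterior inclusion probabilities. For the inverse logit,
  \<open>\<nabla>m\<^sub>j = m\<^sub>j (1 - m\<^sub>j) z\<^sub>j\<close> and the denominators cancel.\<close>

lemma GDERIV_unique:
  assumes "GDERIV f x :> a" and "GDERIV f x :> b"
  shows "a = b"
proof -
  have "(\<lambda>h. h \<bullet> a) = (\<lambda>h. h \<bullet> b)"
    using assms unfolding gderiv_def by (rule has_derivative_unique)
  then show ?thesis
    by (metis vector_eq_ldot)
qed

lemma grad_eqI: "GDERIV f x :> g \<Longrightarrow> grad f x = g"
  unfolding grad_def by (blast intro: GDERIV_unique)

lemma GDERIV_grad:
  fixes f :: "'a::euclidean_space \<Rightarrow> real"
  assumes "f differentiable (at x)"
  shows "GDERIV f x :> grad f x"
proof -
  obtain L where L: "(f has_derivative L) (at x)"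
    using assms unfolding differentiable_def by blast
  have "L h = h \<bullet> adjoint L 1" for h
    using adjoint_works[OF has_derivative_linear[OF L]] by simp
  then have "GDERIV f x :> adjoint L 1"
    using L unfolding gderiv_def by (metis ext)
  then show ?thesis
    by (simp add: grad_eqI)
qed

lemma GDERIV_imp_differentiable: "GDERIV f x :> g \<Longrightarrow> f differentiable (at x)"
  unfolding gderiv_def differentiable_def by blast

lemma GDERIV_sum:
  assumes "finite S" and "\<And>i. i \<in> S \<Longrightarrow> GDERIV (f i) x :> d i"
  shows "GDERIV (\<lambda>x. \<Sum>i\<in>S. f i x) x :> (\<Sum>i\<in>S. d i)"
  using assms by (induction S rule: finite_induct) (simp_all add: GDERIV_const GDERIV_add)

lemma differentiable_prod:
  fixes f :: "'i \<Rightarrow> 'a::real_normed_vector \<Rightarrow> real"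
  assumes "finite S" and "\<And>i. i \<in> S \<Longrightarrow> f i differentiable (at x)"
  shows "(\<lambda>x. \<Prod>i\<in>S. f i x) differentiable (at x)"
  using assms by (induction S rule: finite_induct) simp_all

lemma GDERIV_ln:
  assumes "GDERIV f x :> D" and "f x > 0"
  shows "GDERIV (\<lambda>x. ln (f x)) x :> inverse (f x) *\<^sub>R D"
  by (rule GDERIV_DERIV_compose[OF assms(1) DERIV_ln[OF assms(2)]])

lemma sum_post_eq_1:
  assumes "marg \<Gamma> lik prior \<omega> \<noteq> 0"
  shows "(\<Sum>\<gamma>\<in>\<Gamma>. post \<Gamma> lik prior \<gamma> \<omega>) = 1"
  using assms unfolding post_def by (simp add: sum_divide_distrib[symmetric] marg_def[symmetric])

lemma GDERIV_ln_marg: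
  fixes prior :: "'g \<Rightarrow> 'a::euclidean_space \<Rightarrow> real"
  assumes fin: "finite \<Gamma>"
    and pos: "\<And>\<gamma>. \<gamma> \<in> \<Gamma> \<Longrightarrow> prior \<gamma> \<omega> > 0"
    and diff: "\<And>\<gamma>. \<gamma> \<in> \<Gamma> \<Longrightarrow> prior \<gamma> differentiable (at \<omega>)"
    and marg_pos: "marg \<Gamma> lik prior \<omega> > 0"
  shows "GDERIV (\<lambda>w. ln (marg \<Gamma> lik prior w)) \<omega> :>
           (\<Sum>\<gamma>\<in>\<Gamma>. post \<Gamma> lik prior \<gamma> \<omega> *\<^sub>R grad (\<lambda>w. ln (prior \<gamma> w)) \<omega>)"
proof -
  define D where "D \<gamma> = grad (prior \<gamma>) \<omega>" for \<gamma>
  define M where "M = marg \<Gamma> lik prior \<omega>"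
  have D: "GDERIV (prior \<gamma>) \<omega> :> D \<gamma>" if "\<gamma> \<in> \<Gamma>" for \<gamma>
    unfolding D_def using GDERIV_grad diff that by blast
  have marg_grad: "GDERIV (marg \<Gamma> lik prior) \<omega> :> (\<Sum>\<gamma>\<in>\<Gamma>. lik \<gamma> *\<^sub>R D \<gamma>)"
    unfolding marg_def[abs_def]
    by (rule GDERIV_sum[OF fin]) (use GDERIV_mult[OF GDERIV_const D] in simp)
  have ln_marg_grad: "GDERIV (\<lambda>w. ln (marg \<Gamma> lik prior w)) \<omega> :>
      (\<Sum>\<gamma>\<in>\<Gamma>. inverse M *\<^sub>R lik \<gamma> *\<^sub>R D \<gamma>)"
    using GDERIV_ln[OF marg_grad marg_pos] unfolding M_def by (simp add: scaleR_sum_right)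
  have "post \<Gamma> lik prior \<gamma> \<omega> *\<^sub>R grad (\<lambda>w. ln (prior \<gamma> w)) \<omega> = inverse M *\<^sub>R lik \<gamma> *\<^sub>R D \<gamma>"
    if "\<gamma> \<in> \<Gamma>" for \<gamma>
  proof -
    have "grad (\<lambda>w. ln (prior \<gamma> w)) \<omega> = inverse (prior \<gamma> \<omega>) *\<^sub>R D \<gamma>"
      using GDERIV_ln[OF D pos] that by (simp add: grad_eqI)
    then show ?thesis
      using pos[OF that] unfolding post_def M_def by (simp add: field_simps)
  qed
  then show ?thesis
    using ln_marg_grad by (simp cong: sum.cong)
qed

lemma finite_binary_models: "finite (binary_models p)"
proof -
  have "binary_models p =
      {f. \<forall>x. (x \<in> {1..p} \<longrightarrow> f x \<in> {0,1}) \<and> (x \<notin> {1..p} \<longrightarrow> f x = 0)}"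
    unfolding binary_models_def by auto
  then show ?thesis
    using finite_set_of_finite_funs[of "{1..p}" "{0::nat,1}" 0] by simp
qed

lemma binary_models_coord: "\<gamma> \<in> binary_models p \<Longrightarrow> j \<in> {1..p} \<Longrightarrow> \<gamma> j \<in> {0,1}"
  unfolding binary_models_def by blast

lemma bern_binary: "g \<in> {0,1} \<Longrightarrow> bern g m = (if g = 1 then m else 1 - m)"
  unfolding bern_def by auto

lemma bern_pos: "g \<in> {0,1} \<Longrightarrow> 0 < m \<Longrightarrow> m < 1 \<Longrightarrow> bern g m > 0"
  by (auto simp: bern_binary)

lemma GDERIV_ln_bern:
  assumes g: "g \<in> {0,1}" and f: "0 < f x" "f x < 1" and D: "GDERIV f x :> D"
  shows "GDERIV (\<lambda>w. ln (bern g (f w))) x :> ((real g - f x) / (f x * (1 - f x))) *\<^sub>R D"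
proof (cases "g = 1")
  case True
  have "(\<lambda>w. ln (bern g (f w))) = (\<lambda>w. ln (f w))"
    using True by (simp add: bern_def)
  moreover have "(real g - f x) / (f x * (1 - f x)) = inverse (f x)"
    using True f by (simp add: field_simps)
  ultimately show ?thesis
    using GDERIV_ln[OF D f(1)] by simp
next
  case False
  then have "(\<lambda>w. ln (bern g (f w))) = (\<lambda>w. ln (1 - f w))"
    using g by (simp add: bern_def)
  moreover have "GDERIV (\<lambda>w. ln (1 - f w)) x :> inverse (1 - f x) *\<^sub>R (0 - D)"
    using f by (intro GDERIV_ln GDERIV_diff GDERIV_const D) simp
  moreover have "inverse (1 - f x) *\<^sub>R (0 - D) = ((real g - f x) / (f x * (1 - f x))) *\<^sub>R D"
    using False g f by (simp add: field_simps)
  ultimately show ?thesis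
    by simp
qed

lemma bern_prior_pos:
  assumes "\<gamma> \<in> binary_models p" and "\<And>j. j \<in> {1..p} \<Longrightarrow> 0 < m j w \<and> m j w < 1"
  shows "bern_prior p m \<gamma> w > 0"
  unfolding bern_prior_def using assms
  by (intro prod_pos ballI bern_pos binary_models_coord) auto

lemma differentiable_bern_prior:
  fixes m :: "nat \<Rightarrow> 'a::real_normed_vector \<Rightarrow> real"
  assumes "\<And>j. j \<in> {1..p} \<Longrightarrow> m j differentiable (at w)"
  shows "bern_prior p m \<gamma> differentiable (at w)"
  unfolding bern_prior_def[abs_def] bern_def using assms
  by (intro differentiable_prod) auto

lemma grad_ln_bern_prior:
  fixes m :: "nat \<Rightarrow> 'a::euclidean_space \<Rightarrow> real"
  assumes \<gamma>: "\<gamma> \<in> binary_models p"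
    and m_bounds: "\<And>j w. j \<in> {1..p} \<Longrightarrow> 0 < m j w \<and> m j w < 1"
    and m_diff: "\<And>j. j \<in> {1..p} \<Longrightarrow> m j differentiable (at \<omega>)"
  shows "grad (\<lambda>w. ln (bern_prior p m \<gamma> w)) \<omega> =
           (\<Sum>j=1..p. ((real (\<gamma> j) - m j \<omega>) / (m j \<omega> * (1 - m j \<omega>))) *\<^sub>R grad (m j) \<omega>)"
proof -
  have "(\<lambda>w. ln (bern_prior p m \<gamma> w)) = (\<lambda>w. \<Sum>j=1..p. ln (bern (\<gamma> j) (m j w)))"
    unfolding bern_prior_def using m_bounds bern_pos[OF binary_models_coord[OF \<gamma>]]
    by (intro ext ln_prod) (simp, metis order_less_irrefl)
  moreover have "GDERIV (\<lambda>w. \<Sum>j=1..p. ln (bern (\<gamma> j) (m j w))) \<omega> :>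
      (\<Sum>j=1..p. ((real (\<gamma> j) - m j \<omega>) / (m j \<omega> * (1 - m j \<omega>))) *\<^sub>R grad (m j) \<omega>)"
    using binary_models_coord[OF \<gamma>] m_bounds GDERIV_grad[OF m_diff]
    by (intro GDERIV_sum GDERIV_ln_bern) auto
  ultimately show ?thesis
    by (simp add: grad_eqI)
qed

lemma incl_post_eq_sum_post:
  assumes "finite \<Gamma>" and "\<And>\<gamma>. \<gamma> \<in> \<Gamma> \<Longrightarrow> coord \<gamma> j \<in> {0,1}"
  shows "incl_post \<Gamma> lik prior coord j \<omega> = (\<Sum>\<gamma>\<in>\<Gamma>. post \<Gamma> lik prior \<gamma> \<omega> * real (coord \<gamma> j))"
proof -
  have "incl_post \<Gamma> lik prior coord j \<omega> =
      (\<Sum>\<gamma>\<in>\<Gamma>. if coord \<gamma> j = 1 then post \<Gamma> lik prior \<gamma> \<omega> else 0)"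
    unfolding incl_post_def by (simp add: sum.inter_filter[OF assms(1)])
  also have "\<dots> = (\<Sum>\<gamma>\<in>\<Gamma>. post \<Gamma> lik prior \<gamma> \<omega> * real (coord \<gamma> j))"
    using assms(2) by (intro sum.cong) fastforce+
  finally show ?thesis .
qed

lemma sum_post_affine_coord:
  assumes "finite \<Gamma>" and "\<And>\<gamma>. \<gamma> \<in> \<Gamma> \<Longrightarrow> coord \<gamma> j \<in> {0,1}"
    and "marg \<Gamma> lik prior \<omega> \<noteq> 0"
  shows "(\<Sum>\<gamma>\<in>\<Gamma>. post \<Gamma> lik prior \<gamma> \<omega> * ((real (coord \<gamma> j) - a) / b)) =
           (incl_post \<Gamma> lik prior coord j \<omega> - a) / b"
proof -
  have "(\<Sum>\<gamma>\<in>\<Gamma>. post \<Gamma> lik prior \<gamma> \<omega> * ((real (coord \<gamma> j) - a) / b)) =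
      ((\<Sum>\<gamma>\<in>\<Gamma>. post \<Gamma> lik prior \<gamma> \<omega> * real (coord \<gamma> j))
        - a * (\<Sum>\<gamma>\<in>\<Gamma>. post \<Gamma> lik prior \<gamma> \<omega>)) / b"
    unfolding sum_distrib_left sum_subtractf[symmetric] sum_divide_distrib
    by (intro sum.cong) (simp_all add: algebra_simps)
  then show ?thesis
    using assms by (simp add: incl_post_eq_sum_post sum_post_eq_1)
qed

lemma GDERIV_ln_marg_bern_prior:
  fixes m :: "nat \<Rightarrow> 'a::euclidean_space \<Rightarrow> real"
  assumes m_bounds: "\<And>j w. j \<in> {1..p} \<Longrightarrow> 0 < m j w \<and> m j w < 1"
    and m_diff: "\<And>j. j \<in> {1..p} \<Longrightarrow> m j differentiable (at \<omega>)"
    and marg_pos: "marg (binary_models p) lik (bern_prior p m) \<omega> > 0"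
  shows "GDERIV (\<lambda>w. ln (marg (binary_models p) lik (bern_prior p m) w)) \<omega> :>
           (\<Sum>j=1..p. ((incl_post (binary_models p) lik (bern_prior p m) (\<lambda>\<gamma>. \<gamma>) j \<omega> - m j \<omega>)
                        / (m j \<omega> * (1 - m j \<omega>))) *\<^sub>R grad (m j) \<omega>)"
proof -
  let ?B = "binary_models p"
  let ?q = "\<lambda>\<gamma>. post ?B lik (bern_prior p m) \<gamma> \<omega>"
  let ?c = "\<lambda>\<gamma> j. (real (\<gamma> j) - m j \<omega>) / (m j \<omega> * (1 - m j \<omega>))"
  have "GDERIV (\<lambda>w. ln (marg ?B lik (bern_prior p m) w)) \<omega> :>
      (\<Sum>\<gamma>\<in>?B. ?q \<gamma> *\<^sub>R grad (\<lambda>w. ln (bern_prior p m \<gamma> w)) \<omega>)"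
  proof (rule GDERIV_ln_marg[OF finite_binary_models _ _ marg_pos])
    show "bern_prior p m \<gamma> \<omega> > 0" if "\<gamma> \<in> ?B" for \<gamma>
      using that m_bounds by (rule bern_prior_pos)
    show "bern_prior p m \<gamma> differentiable (at \<omega>)" for \<gamma>
      using m_diff by (rule differentiable_bern_prior)
  qed
  also have "(\<Sum>\<gamma>\<in>?B. ?q \<gamma> *\<^sub>R grad (\<lambda>w. ln (bern_prior p m \<gamma> w)) \<omega>) =
      (\<Sum>\<gamma>\<in>?B. \<Sum>j=1..p. (?q \<gamma> * ?c \<gamma> j) *\<^sub>R grad (m j) \<omega>)"
    using grad_ln_bern_prior[OF _ m_bounds m_diff] by (simp add: scaleR_sum_right)
  also have "\<dots> = (\<Sum>j=1..p. (\<Sum>\<gamma>\<in>?B. ?q \<gamma> * ?c \<gamma> j) *\<^sub>R grad (m j) \<omega>)"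
    by (simp add: sum.swap[of _ ?B] scaleR_sum_left)
  also have "\<dots> = (\<Sum>j=1..p. ((incl_post ?B lik (bern_prior p m) (\<lambda>\<gamma>. \<gamma>) j \<omega> - m j \<omega>)
                        / (m j \<omega> * (1 - m j \<omega>))) *\<^sub>R grad (m j) \<omega>)"
    using finite_binary_models binary_models_coord marg_pos
    by (intro sum.cong refl arg_cong2[where f = scaleR] sum_post_affine_coord) auto
  finally show ?thesis .
qed

lemma inv_logit_bounds: "0 < inv_logit z w" "inv_logit z w < 1"
  unfolding inv_logit_def by (auto simp: divide_simps add_pos_pos)

lemma GDERIV_inner_left: "GDERIV (\<lambda>w. z \<bullet> w) x :> z"
  unfolding gderiv_def inner_commute[of z] by (rule has_derivative_inner_left[OF has_derivative_ident])

lemma GDERIV_inv_logit: "GDERIV (inv_logit z) w :> (inv_logit z w * (1 - inv_logit z w)) *\<^sub>R z"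
proof -
  let ?\<sigma> = "\<lambda>t::real. 1 / (1 + exp (- t))"
  have "1 + exp (- t) \<noteq> 0" for t :: real
    by (metis add_pos_pos exp_gt_zero zero_less_one order_less_irrefl)
  then have "DERIV ?\<sigma> t :> ?\<sigma> t * (1 - ?\<sigma> t)" for t
    by (auto intro!: derivative_eq_intros simp: power2_eq_square field_simps)
  from GDERIV_DERIV_compose[OF GDERIV_inner_left this] show ?thesis
    unfolding inv_logit_def[abs_def] .
qed

lemma GDERIV_ln_marg_inv_logit:
  fixes z :: "nat \<Rightarrow> 'a::euclidean_space"
  assumes marg_pos: "marg (binary_models p) lik (bern_prior p (\<lambda>j. inv_logit (z j))) \<omega> > 0"
  shows "GDERIV (\<lambda>w. ln (marg (binary_models p) lik (bern_prior p (\<lambda>j. inv_logit (z j))) w)) \<omega> :>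
           (\<Sum>j=1..p. (incl_post (binary_models p) lik (bern_prior p (\<lambda>j. inv_logit (z j))) (\<lambda>\<gamma>. \<gamma>) j \<omega>
                        - inv_logit (z j) \<omega>) *\<^sub>R z j)"
proof -
  let ?m = "\<lambda>j. inv_logit (z j)"
  have "((a - ?m j \<omega>) / (?m j \<omega> * (1 - ?m j \<omega>))) *\<^sub>R grad (?m j) \<omega> = (a - ?m j \<omega>) *\<^sub>R z j"
    for a j
    using inv_logit_bounds[of "z j" \<omega>] by (simp add: grad_eqI[OF GDERIV_inv_logit])
  moreover have "GDERIV (\<lambda>w. ln (marg (binary_models p) lik (bern_prior p ?m) w)) \<omega> :>
      (\<Sum>j=1..p. ((incl_post (binary_models p) lik (bern_prior p ?m) (\<lambda>\<gamma>. \<gamma>) j \<omega> - ?m j \<omega>)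
                   / (?m j \<omega> * (1 - ?m j \<omega>))) *\<^sub>R grad (?m j) \<omega>)"
    using GDERIV_imp_differentiable[OF GDERIV_inv_logit] marg_pos
    by (intro GDERIV_ln_marg_bern_prior) (simp_all add: inv_logit_bounds)
  ultimately show ?thesis
    by simp
qed

theorem theorem3:
  shows
  "(\<forall>(\<Gamma>::'g set) (lik::'g \<Rightarrow> real) (prior::'g \<Rightarrow> real^'q \<Rightarrow> real) \<omega>.
      finite \<Gamma> \<and> (\<forall>\<gamma>\<in>\<Gamma>. lik \<gamma> \<ge> 0)
      \<and> (\<forall>\<gamma>\<in>\<Gamma>. \<forall>w. prior \<gamma> w > 0 \<and> prior \<gamma> differentiable (at w))
      \<and> (\<forall>w. marg \<Gamma> lik prior w > 0)
      \<longrightarrow> GDERIV (\<lambda>w. ln (marg \<Gamma> lik prior w)) \<omega> :>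
            (\<Sum>\<gamma>\<in>\<Gamma>. post \<Gamma> lik prior \<gamma> \<omega> *\<^sub>R grad (\<lambda>w. ln (prior \<gamma> w)) \<omega>))
   \<and>
   (\<forall>(p::nat) (lik::(nat \<Rightarrow> nat) \<Rightarrow> real) (m::nat \<Rightarrow> real^'q \<Rightarrow> real) \<omega>.
      (\<forall>\<gamma>\<in>binary_models p. lik \<gamma> \<ge> 0)
      \<and> (\<forall>j\<in>{1..p}. \<forall>w. 0 < m j w \<and> m j w < 1 \<and> m j differentiable (at w))
      \<and> (\<forall>w. marg (binary_models p) lik (bern_prior p m) w > 0)
      \<longrightarrow> GDERIV (\<lambda>w. ln (marg (binary_models p) lik (bern_prior p m) w)) \<omega> :>
            (\<Sum>j=1..p. ((incl_post (binary_models p) lik (bern_prior p m) (\<lambda>\<gamma>. \<gamma>) j \<omega> - m j \<omega>)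
                         / (m j \<omega> * (1 - m j \<omega>))) *\<^sub>R grad (m j) \<omega>))
   \<and>
   (\<forall>(p::nat) (lik::(nat \<Rightarrow> nat) \<Rightarrow> real) (z::nat \<Rightarrow> real^'q) \<omega>.
      (\<forall>\<gamma>\<in>binary_models p. lik \<gamma> \<ge> 0)
      \<and> (\<forall>w. marg (binary_models p) lik (bern_prior p (\<lambda>j. inv_logit (z j))) w > 0)
      \<longrightarrow> GDERIV (\<lambda>w. ln (marg (binary_models p) lik (bern_prior p (\<lambda>j. inv_logit (z j))) w)) \<omega> :>
            (\<Sum>j=1..p. (incl_post (binary_models p) lik (bern_prior p (\<lambda>j. inv_logit (z j))) (\<lambda>\<gamma>. \<gamma>) j \<omega>
                         - inv_logit (z j) \<omega>) *\<^sub>R z j))"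
  apply (intro conjI allI impI; elim conjE)
  subgoal by (rule GDERIV_ln_marg) auto
  subgoal by (rule GDERIV_ln_marg_bern_prior) auto
  subgoal by (rule GDERIV_ln_marg_inv_logit) auto
  done

end
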